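(* A pargoid $\mathbf{A}=\langle A,\cdot\rangle$ is combinatorially complete if and only if (i) there exist $s,k\in A$ making $\langle A,\cdot,s,k\rangle$ a semicombinatory algebra, and (ii) either $\mathbf{A}$ is total or $\mathbf{A}$ contains a left passive element.
   Context: A pargoid is a nonempty set $A$ with a partial binary operation $\cdot$ (application); it is total if $\cdot$ is everywhere defined. Products associate to the left, $xyz=(xy)z$, and a compound product is defined only if all its sub-products are defined (strictness). Kleene equality $M\simeq N$ means: if either side is defined then both are defined and equal. An element $a\in A$ is left passive if $a\cdot x$ is undefined for every $x\in A$. The polynomial operations of $\mathbf{A}$ form the least set of partial finitary operations on $A$ containing $\cdot$, all projections $(a_0,\dots,a_{n-1})\mapsto a_i$, and all nullary constant operations with value $a\in A$, closed under composition $f(g_0,\dots,g_{n-1})(\bar x)\simeq f(g_0(\bar x),\dots,g_{n-1}(\bar x))$ (defined only if every $g_i(\bar x)$ is defined and $f$ is defined at the resulting tuple). $\mathbf{A}$ is combinatorially complete if for all $n\ge 1$ and every $n$-ary polynomial operation $p$ of $\mathbf{A}$ there is $a\in A$ such that for all $x_1,\dots,x_n\in A$, $a x_1\cdots x_n\simeq p(x_1,\dots,x_n)$. A semicombinatory algebra is a pargoid together with elements $s,k$ such that for all $x,y,z\in A$: $sxyz\simeq xz(yz)$, and $kxy$ is defined and equals $x$. *)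

theory Defs
  imports Main
begin

text \<open>A pargoid is modelled by a type 'a (the carrier; types are nonempty)
 together with a partial application app :: 'a => 'a => 'a option
 (None = undefined).\<close>

definition apps :: "('a \<Rightarrow> 'a \<Rightarrow> 'a option) \<Rightarrow> 'a \<Rightarrow> 'a list \<Rightarrow> 'a option" where
  "apps app a xs = foldl (\<lambda>r x. Option.bind r (\<lambda>v. app v x)) (Some a) xs"

text \<open>Polynomial operations: poly_op app n f means f is an n-ary polynomial
 operation (only its values on argument lists of length n matter).\<close>
inductive poly_op :: "('a \<Rightarrow> 'a \<Rightarrow> 'a option) \<Rightarrow> nat \<Rightarrow> ('a list \<Rightarrow> 'a option) \<Rightarrow> bool"
  for app where
  op_app: "poly_op app 2 (\<lambda>xs. app (xs ! 0) (xs ! 1))"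
| op_proj: "i < n \<Longrightarrow> poly_op app n (\<lambda>xs. Some (xs ! i))"
| op_const: "poly_op app 0 (\<lambda>xs. Some a)"
| op_comp: "poly_op app m f \<Longrightarrow> (\<forall>i<m. poly_op app n (g i)) \<Longrightarrow>
    poly_op app n (\<lambda>xs. if (\<forall>i<m. g i xs \<noteq> None)
                        then f (map (\<lambda>i. the (g i xs)) [0..<m]) else None)"

definition comb_complete :: "('a \<Rightarrow> 'a \<Rightarrow> 'a option) \<Rightarrow> bool" where
  "comb_complete app \<longleftrightarrow>
     (\<forall>n p. n \<ge> 1 \<longrightarrow> poly_op app n p \<longrightarrow>
        (\<exists>a. \<forall>xs. length xs = n \<longrightarrow> apps app a xs = p xs))"

definition semicombinatory :: "('a \<Rightarrow> 'a \<Rightarrow> 'a option) \<Rightarrow> 'a \<Rightarrow> 'a \<Rightarrow> bool" where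
  "semicombinatory app s k \<longleftrightarrow>
     (\<forall>x y z. apps app s [x, y, z] =
        Option.bind (app x z) (\<lambda>u. Option.bind (app y z) (\<lambda>v. app u v)))
   \<and> (\<forall>x y. apps app k [x, y] = Some x)"

definition total :: "('a \<Rightarrow> 'a \<Rightarrow> 'a option) \<Rightarrow> bool" where
  "total app \<longleftrightarrow> (\<forall>x y. app x y \<noteq> None)"

definition left_passive :: "('a \<Rightarrow> 'a \<Rightarrow> 'a option) \<Rightarrow> 'a \<Rightarrow> bool" where
  "left_passive app a \<longleftrightarrow> (\<forall>x. app a x = None)"

end

theory Submission
  imports Defs
begin

text \<open>Every applicative term built from variables and constants denotes a polynomial
  operation, and in the presence of \<open>k\<close> every polynomial operation is denoted by such a term.
  Given \<open>s\<close> and \<open>k\<close>, bracket abstraction turns a term \<open>t\<close> in \<open>n\<close> variables into a closed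
  term \<open>c\<close> with \<open>c x\<^sub>1 \<dots> x\<^sub>n \<simeq> t\<close>. If \<open>c\<close> is defined its value represents \<open>t\<close>; if not,
  \<open>t\<close> is nowhere defined, which cannot happen in a total pargoid and otherwise is represented
  by any left passive element, as \<open>n \<ge> 1\<close>.
  Conversely, \<open>k\<close> and \<open>s\<close> represent \<open>x\<^sub>0\<close> and \<open>x\<^sub>0 x\<^sub>2 (x\<^sub>1 x\<^sub>2)\<close>, and if \<open>a b\<close> is undefined,
  an element representing the unary constant operation \<open>a b\<close> is left passive.\<close>

lemma apps_Nil [simp]: "apps app a [] = Some a"
  by (simp add: apps_def)

lemma apps_snoc: "apps app a (xs @ [x]) = Option.bind (apps app a xs) (\<lambda>v. app v x)"
  by (simp add: apps_def)

lemma apps_Cons_None: "app a x = None \<Longrightarrow> apps app a (x # xs) = None"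
proof -
  have "foldl (\<lambda>r x. Option.bind r (\<lambda>v. app v x)) None xs = None" for xs
    by (induction xs) auto
  then show "app a x = None \<Longrightarrow> apps app a (x # xs) = None"
    by (simp add: apps_def)
qed

lemma semicombinatory_s:
  "semicombinatory app s k \<Longrightarrow>
    Option.bind (app s x) (\<lambda>f. Option.bind (app f y) (\<lambda>g. app g z)) =
    Option.bind (app x z) (\<lambda>u. Option.bind (app y z) (app u))"
  by (simp add: semicombinatory_def apps_def)

lemma semicombinatory_k:
  "semicombinatory app s k \<Longrightarrow> Option.bind (app k x) (\<lambda>v. app v y) = Some x"
  by (simp add: semicombinatory_def apps_def)

datatype 'a tm = Var nat | Const 'a | App "'a tm" "'a tm"

fun eval_tm :: "('a \<Rightarrow> 'a \<Rightarrow> 'a option) \<Rightarrow> 'a list \<Rightarrow> 'a tm \<Rightarrow> 'a option" where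
  "eval_tm app xs (Var i) = Some (xs ! i)"
| "eval_tm app xs (Const a) = Some a"
| "eval_tm app xs (App t u) =
     Option.bind (eval_tm app xs t) (\<lambda>v. Option.bind (eval_tm app xs u) (app v))"

fun vars_below :: "nat \<Rightarrow> 'a tm \<Rightarrow> bool" where
  "vars_below n (Var i) \<longleftrightarrow> i < n"
| "vars_below n (Const a) \<longleftrightarrow> True"
| "vars_below n (App t u) \<longleftrightarrow> vars_below n t \<and> vars_below n u"

fun subst_tm :: "(nat \<Rightarrow> 'a tm) \<Rightarrow> 'a tm \<Rightarrow> 'a tm" where
  "subst_tm \<sigma> (Var i) = \<sigma> i"
| "subst_tm \<sigma> (Const a) = Const a"
| "subst_tm \<sigma> (App t u) = App (subst_tm \<sigma> t) (subst_tm \<sigma> u)"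

text \<open>Composition of polynomial operations is strict in every inner operation, even one the
  outer operation ignores; substitution alone loses this, so the inner terms are reattached as
  discarded second arguments of \<open>k\<close>.\<close>
fun guard :: "'a \<Rightarrow> 'a tm \<Rightarrow> 'a tm list \<Rightarrow> 'a tm" where
  "guard k t [] = t"
| "guard k t (u # us) = App (App (Const k) (guard k t us)) u"

lemma vars_below_subst_tm:
  "vars_below m t \<Longrightarrow> (\<forall>i<m. vars_below n (\<sigma> i)) \<Longrightarrow> vars_below n (subst_tm \<sigma> t)"
  by (induction t) auto

lemma vars_below_guard:
  "vars_below n t \<Longrightarrow> (\<forall>u\<in>set us. vars_below n u) \<Longrightarrow> vars_below n (guard k t us)"
  by (induction us) auto

lemma eval_subst_tm:
  "vars_below m t \<Longrightarrow> (\<forall>i<m. eval_tm app xs (\<sigma> i) \<noteq> None) \<Longrightarrow>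
    eval_tm app xs (subst_tm \<sigma> t) = eval_tm app (map (\<lambda>i. the (eval_tm app xs (\<sigma> i))) [0..<m]) t"
  by (induction t) auto

lemma eval_guard:
  assumes "\<And>x y. apps app k [x, y] = Some x"
  shows "eval_tm app xs (guard k t us) =
    (if \<forall>u\<in>set us. eval_tm app xs u \<noteq> None then eval_tm app xs t else None)"
proof -
  have "Option.bind (app k a) (\<lambda>v. app v b) = Some a" for a b
    using assms[of a b] by (simp add: apps_def)
  then show ?thesis
    by (induction us) (auto split: option.splits)
qed

lemma eval_guard_subst_tm:
  assumes "\<And>x y. apps app k [x, y] = Some x" and "vars_below m t"
  shows "eval_tm app xs (guard k (subst_tm \<sigma> t) (map \<sigma> [0..<m])) =
    (if \<forall>i<m. eval_tm app xs (\<sigma> i) \<noteq> None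
     then eval_tm app (map (\<lambda>i. the (eval_tm app xs (\<sigma> i))) [0..<m]) t else None)"
proof -
  have all_map_upt: "(\<forall>u\<in>set (map \<sigma> [0..<m]). P u) \<longleftrightarrow> (\<forall>i<m. P (\<sigma> i))" for P
    by auto
  show ?thesis
    by (simp only: eval_guard[OF assms(1)] all_map_upt) (auto simp: eval_subst_tm[OF assms(2)])
qed

lemma poly_op_denoted_by_tm:
  assumes "\<And>x y. apps app k [x, y] = Some x"
  shows "poly_op app n f \<Longrightarrow>
    \<exists>t. vars_below n t \<and> (\<forall>xs. length xs = n \<longrightarrow> eval_tm app xs t = f xs)"
proof (induction rule: poly_op.induct)
  case op_app
  show ?case by (intro exI[of _ "App (Var 0) (Var 1)"]) auto
next
  case (op_proj i n)
  then show ?case by (intro exI[of _ "Var i"]) auto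
next
  case (op_const a)
  show ?case by (intro exI[of _ "Const a"]) auto
next
  case (op_comp m f n g)
  obtain t where t: "vars_below m t" "\<forall>ys. length ys = m \<longrightarrow> eval_tm app ys t = f ys"
    using op_comp.IH by blast
  obtain \<sigma> where \<sigma>: "\<forall>i<m. vars_below n (\<sigma> i) \<and>
      (\<forall>xs. length xs = n \<longrightarrow> eval_tm app xs (\<sigma> i) = g i xs)"
    using op_comp.IH by metis
  show ?case
  proof (intro exI conjI allI impI)
    show "vars_below n (guard k (subst_tm \<sigma> t) (map \<sigma> [0..<m]))"
      using \<sigma> t by (auto intro!: vars_below_guard vars_below_subst_tm)
  next
    fix xs :: "'a list"
    assume "length xs = n"
    then have g: "\<forall>i<m. eval_tm app xs (\<sigma> i) = g i xs"
      using \<sigma> by blast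
    then have defined: "(\<forall>i<m. eval_tm app xs (\<sigma> i) \<noteq> None) \<longleftrightarrow> (\<forall>i<m. g i xs \<noteq> None)"
      and args: "map (\<lambda>i. the (eval_tm app xs (\<sigma> i))) [0..<m] = map (\<lambda>i. the (g i xs)) [0..<m]"
      by auto
    show "eval_tm app xs (guard k (subst_tm \<sigma> t) (map \<sigma> [0..<m])) =
      (if \<forall>i<m. g i xs \<noteq> None then f (map (\<lambda>i. the (g i xs)) [0..<m]) else None)"
      unfolding eval_guard_subst_tm[OF assms t(1)] defined args using t(2) by auto
  qed
qed

lemma poly_op_bind_app:
  assumes "poly_op app n f" and "poly_op app n g"
  shows "poly_op app n (\<lambda>xs. Option.bind (f xs) (\<lambda>u. Option.bind (g xs) (app u)))"
proof -
  let ?h = "\<lambda>i::nat. if i = 0 then f else g"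
  have "poly_op app n (\<lambda>xs. if \<forall>i<2. ?h i xs \<noteq> None
      then (\<lambda>ys. app (ys ! 0) (ys ! 1)) (map (\<lambda>i. the (?h i xs)) [0..<2]) else None)"
    using assms by (intro op_comp[OF op_app]) auto
  moreover have "(\<lambda>xs. if \<forall>i<2. ?h i xs \<noteq> None
      then (\<lambda>ys. app (ys ! 0) (ys ! 1)) (map (\<lambda>i. the (?h i xs)) [0..<2]) else None) =
    (\<lambda>xs. Option.bind (f xs) (\<lambda>u. Option.bind (g xs) (app u)))"
  proof -
    have all_less_2: "(\<forall>i<2::nat. P i) \<longleftrightarrow> P 0 \<and> P 1" for P
      by (auto simp: less_2_cases_iff)
    show ?thesis
      by (auto simp: fun_eq_iff all_less_2 upt_rec split: option.splits)
  qed
  ultimately show ?thesis by simp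
qed

lemma poly_op_eval_tm: "vars_below n t \<Longrightarrow> poly_op app n (\<lambda>xs. eval_tm app xs t)"
proof (induction t)
  case (Var i)
  then show ?case by (simp add: op_proj)
next
  case (Const a)
  show ?case using op_comp[OF op_const[of app a], of n] by simp
next
  case (App t u)
  then show ?case using poly_op_bind_app[of app n "\<lambda>xs. eval_tm app xs t"] by simp
qed

text \<open>Bracket abstraction of the variable \<open>n\<close>, with \<open>s k k\<close> as the identity combinator.\<close>
fun abstract_tm :: "'a \<Rightarrow> 'a \<Rightarrow> nat \<Rightarrow> 'a tm \<Rightarrow> 'a tm" where
  "abstract_tm s k n (Var i) =
     (if i = n then App (App (Const s) (Const k)) (Const k) else App (Const k) (Var i))"
| "abstract_tm s k n (Const a) = App (Const k) (Const a)"
| "abstract_tm s k n (App t u) = App (App (Const s) (abstract_tm s k n t)) (abstract_tm s k n u)"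

lemma vars_below_abstract_tm: "vars_below (Suc n) t \<Longrightarrow> vars_below n (abstract_tm s k n t)"
  by (induction t) auto

lemma eval_abstract_tm:
  assumes sk: "semicombinatory app s k"
    and "vars_below (Suc n) t" and "length xs = n"
  shows "Option.bind (eval_tm app xs (abstract_tm s k n t)) (\<lambda>v. app v x) = eval_tm app (xs @ [x]) t"
  using assms(2)
proof (induction t)
  case (Var i)
  show ?case
  proof (cases "i = n")
    case True
    obtain a where a: "app k x = Some a"
      using semicombinatory_k[OF sk, of x x] by (cases "app k x") auto
    then have "app a a = Some x"
      using semicombinatory_k[OF sk, of x a] by simp
    then show ?thesis
      using True a semicombinatory_s[OF sk, of k k x] assms(3) by (simp add: nth_append)
  next
    case False
    then show ?thesis
      using Var assms(3) semicombinatory_k[OF sk] by (simp add: nth_append)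
  qed
next
  case (Const a)
  then show ?case using semicombinatory_k[OF sk] by simp
next
  case (App t u)
  then show ?case
    by (cases "eval_tm app xs (abstract_tm s k n t)"; cases "eval_tm app xs (abstract_tm s k n u)")
      (simp_all add: semicombinatory_s[OF sk])
qed

lemma closed_tm_combinator:
  assumes sk: "semicombinatory app s k"
  shows "vars_below n t \<Longrightarrow> \<exists>c. \<forall>xs. length xs = n \<longrightarrow>
    Option.bind (eval_tm app [] c) (\<lambda>a. apps app a xs) = eval_tm app xs t"
proof (induction n arbitrary: t)
  case 0
  then show ?case by (intro exI[of _ t]) simp
next
  case (Suc n)
  obtain c where c: "\<forall>ys. length ys = n \<longrightarrow>
      Option.bind (eval_tm app [] c) (\<lambda>a. apps app a ys) = eval_tm app ys (abstract_tm s k n t)"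
    using Suc.IH[OF vars_below_abstract_tm[OF Suc.prems]] by blast
  show ?case
  proof (intro exI allI impI)
    fix xs :: "'a list"
    assume "length xs = Suc n"
    then obtain ys x where xs: "xs = ys @ [x]" and ys: "length ys = n"
      by (metis length_Suc_conv_rev)
    have "Option.bind (eval_tm app [] c) (\<lambda>a. apps app a xs) =
        Option.bind (Option.bind (eval_tm app [] c) (\<lambda>a. apps app a ys)) (\<lambda>v. app v x)"
      by (simp add: xs apps_snoc)
    also have "\<dots> = Option.bind (eval_tm app ys (abstract_tm s k n t)) (\<lambda>v. app v x)"
      using c ys by simp
    also have "\<dots> = eval_tm app xs t"
      using eval_abstract_tm[OF sk Suc.prems ys] xs by simp
    finally show "Option.bind (eval_tm app [] c) (\<lambda>a. apps app a xs) = eval_tm app xs t" .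
  qed
qed

lemma eval_tm_total: "total app \<Longrightarrow> eval_tm app xs t \<noteq> None"
  by (induction t) (auto simp: total_def)

lemma comb_complete_represents_tm:
  assumes "comb_complete app" and "1 \<le> n" and "vars_below n t"
  obtains a where "\<forall>xs. length xs = n \<longrightarrow> apps app a xs = eval_tm app xs t"
proof -
  have "poly_op app n (\<lambda>xs. eval_tm app xs t)"
    using assms(3) by (rule poly_op_eval_tm)
  with assms(1,2) that show thesis
    unfolding comb_complete_def by blast
qed

lemma comb_complete_semicombinatory:
  assumes "comb_complete app"
  shows "\<exists>s k. semicombinatory app s k"
proof -
  obtain k where k: "\<forall>xs. length xs = 2 \<longrightarrow> apps app k xs = eval_tm app xs (Var 0)"
    using comb_complete_represents_tm[OF assms, of 2 "Var 0"] by auto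
  obtain s where s: "\<forall>xs. length xs = 3 \<longrightarrow>
      apps app s xs = eval_tm app xs (App (App (Var 0) (Var 2)) (App (Var 1) (Var 2)))"
    using comb_complete_represents_tm[OF assms, of 3 "App (App (Var 0) (Var 2)) (App (Var 1) (Var 2))"]
    by auto
  have "apps app s [x, y, z] = Option.bind (app x z) (\<lambda>u. Option.bind (app y z) (\<lambda>v. app u v))"
    for x y z
    using s[rule_format, of "[x, y, z]"] by simp
  moreover have "apps app k [x, y] = Some x" for x y
    using k[rule_format, of "[x, y]"] by simp
  ultimately show ?thesis
    unfolding semicombinatory_def by blast
qed

lemma comb_complete_total_or_left_passive:
  assumes "comb_complete app"
  shows "total app \<or> (\<exists>a. left_passive app a)"
proof (cases "total app")
  case False
  then obtain a b where ab: "app a b = None"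
    by (auto simp: total_def)
  obtain e where e: "\<forall>xs. length xs = 1 \<longrightarrow> apps app e xs = eval_tm app xs (App (Const a) (Const b))"
    using comb_complete_represents_tm[OF assms, of 1 "App (Const a) (Const b)"] by auto
  have "app e x = None" for x
    using e[rule_format, of "[x]"] ab by (simp add: apps_def)
  then show ?thesis
    unfolding left_passive_def by blast
qed simp

lemma semicombinatory_comb_complete:
  assumes sk: "semicombinatory app s k" and total_or_passive: "total app \<or> (\<exists>a. left_passive app a)"
  shows "comb_complete app"
  unfolding comb_complete_def
proof (intro allI impI)
  fix n p
  assume n: "1 \<le> n" and p: "poly_op app n p"
  have k: "\<And>x y. apps app k [x, y] = Some x"
    using sk by (simp add: semicombinatory_def)
  obtain t where t: "vars_below n t" "\<forall>xs. length xs = n \<longrightarrow> eval_tm app xs t = p xs"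
    using poly_op_denoted_by_tm[OF k p] by blast
  obtain c where c: "\<forall>xs. length xs = n \<longrightarrow>
      Option.bind (eval_tm app [] c) (\<lambda>a. apps app a xs) = eval_tm app xs t"
    using closed_tm_combinator[OF sk t(1)] by blast
  show "\<exists>a. \<forall>xs. length xs = n \<longrightarrow> apps app a xs = p xs"
  proof (cases "eval_tm app [] c")
    case (Some a)
    then show ?thesis
      using c t by (intro exI[of _ a]) auto
  next
    case None
    then obtain e where e: "left_passive app e"
      using total_or_passive eval_tm_total[of app "[]" c] by blast
    have "apps app e xs = p xs" if "length xs = n" for xs
    proof -
      obtain x ys where "xs = x # ys"
        using n \<open>length xs = n\<close> by (cases xs) auto
      then have "apps app e xs = None"
        using e by (simp add: left_passive_def apps_Cons_None)
      moreover have "p xs = None"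
        using c t None \<open>length xs = n\<close> by auto
      ultimately show ?thesis by simp
    qed
    then show ?thesis by blast
  qed
qed

theorem theorem2:
  fixes app :: "'a \<Rightarrow> 'a \<Rightarrow> 'a option"
  shows "comb_complete app \<longleftrightarrow>
    ((\<exists>s k. semicombinatory app s k) \<and> (total app \<or> (\<exists>a. left_passive app a)))"
proof
  assume "comb_complete app"
  then show "(\<exists>s k. semicombinatory app s k) \<and> (total app \<or> (\<exists>a. left_passive app a))"
    using comb_complete_semicombinatory comb_complete_total_or_left_passive by blast
next
  assume "(\<exists>s k. semicombinatory app s k) \<and> (total app \<or> (\<exists>a. left_passive app a))"
  then obtain s k where "semicombinatory app s k" and "total app \<or> (\<exists>a. left_passive app a)"
    by blast
  then show "comb_complete app"
    by (rule semicombinatory_comb_complete)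
qed

end
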